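(* Let $\phi\in(0,1)$, $\alpha_\infty>0$, $K_0>0$, $\eta>0$, $\rho_f>0$, $\Lambda>0$, and set $\nu:=\eta/\rho_f$, $F:=\alpha_\infty/\phi$, $C_2:=FK_0/\nu$, $C_1:=4C_2FK_0/\Lambda^2$. For real $\omega$ define the JKD permeability $$K^D(\omega)=\frac{K_0}{\sqrt{1-\frac{4i\alpha_\infty^2K_0^2\rho_f\omega}{\eta\Lambda^2\phi^2}}-\frac{i\alpha_\infty K_0\rho_f\omega}{\eta\phi}}=\frac{K_0}{\sqrt{1-iC_1\omega}-iC_2\omega},$$ with the principal square root. Let $$\xi_p:=\frac{C_1+\sqrt{C_1^2+4C_2^2}}{2},\qquad \psi(u):=\frac{C_2\sqrt{u(C_1-u)}}{\pi\,[C_2^2+u(C_1-u)]}\ (0\le u\le C_1),\qquad r:=\frac{2C_2\sqrt{\xi_p(\xi_p-C_1)}}{2\xi_p-C_1}.$$ Then $\xi_p>C_1$, the measure $$dG(u)=\chi_{[0,C_1]}(u)\,\frac{\psi(u)}{u}\,du+\frac{r}{\xi_p}\,\delta_{\xi_p}$$ is a probability measure on $[0,\xi_p]$ (i.e. $\int_0^{C_1}\frac{\psi(u)}{u}du+\frac{r}{\xi_p}=1$), and for all real $\omega$ $$K^D(\omega)=\frac{\nu}{F}\int_0^{\xi_p}\frac{u\,dG(u)}{1-i\omega u}.$$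
   Context: $\chi_{[0,C_1]}$ is the indicator function of $[0,C_1]$, $du$ is Lebesgue measure and $\delta_{\xi_p}$ the Dirac measure at $\xi_p$. Physically $\phi$ is porosity, $\alpha_\infty$ infinite-frequency tortuosity, $K_0$ static permeability, $\eta$ dynamic viscosity, $\rho_f$ fluid density, $\Lambda$ the JKD length parameter. *)

theory Defs
  imports "HOL-Analysis.Analysis"
begin

definition JKD_perm :: "real \<Rightarrow> real \<Rightarrow> real \<Rightarrow> real \<Rightarrow> real \<Rightarrow> real \<Rightarrow> real \<Rightarrow> complex" where
  "JKD_perm phi ainf K0 eta rhof Lambda \<omega> =
     complex_of_real K0 /
      (csqrt (1 - \<i> * complex_of_real (4 * ainf\<^sup>2 * K0\<^sup>2 * rhof * \<omega> / (eta * Lambda\<^sup>2 * phi\<^sup>2)))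
       - \<i> * complex_of_real (ainf * K0 * rhof * \<omega> / (eta * phi)))"

end

theory Submission
  imports Defs
begin

text \<open>
  Put \<open>a = C2/\<xi>p\<close> and \<open>b = \<xi>p/C2\<close>, so that \<open>a b = 1\<close> and \<open>C1 = C2 (b - a)\<close>, and substitute
  \<open>u = C1 sin\<^sup>2 \<phi>\<close>. Then \<open>C2\<^sup>2 + u (C1 - u) = C2\<^sup>2 (cos\<^sup>2 \<phi> + a\<^sup>2 sin\<^sup>2 \<phi>) (cos\<^sup>2 \<phi> + b\<^sup>2 sin\<^sup>2 \<phi>)\<close>
  and \<open>1 - i \<omega> u = cos\<^sup>2 \<phi> + k\<^sup>2 sin\<^sup>2 \<phi>\<close> with \<open>k = \<surd>(1 - i C1 \<omega>)\<close>, so all integrals become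
  integrals of rational functions of \<open>sin\<^sup>2 \<phi>\<close> over \<open>[0, \<pi>/2]\<close>. Partial fractions reduce them
  to the elementary integral of \<open>1 / (cos\<^sup>2 \<phi> + k\<^sup>2 sin\<^sup>2 \<phi>)\<close>, which is \<open>\<pi> / (2k)\<close> for
  \<open>Re k > 0\<close>. This gives \<open>\<integral> \<psi>(u)/u du = (b - a)/(a + b)\<close> and
  \<open>\<integral> \<psi>(u)/(1 - i\<omega>u) du = C1 (b - a)/((a + b)(a + k)(b + k))\<close>. What remains is a
  partial-fraction identity for \<open>1/(k - i C2 \<omega>)\<close>, in which the pole at \<open>k = a\<close>, i.e. at
  \<open>1 - i \<omega> \<xi>p = 0\<close>, produces the atom \<open>r/\<xi>p\<close> at \<open>\<xi>p\<close>.
\<close>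

lemma Re_csqrt_pos: "0 < Re z \<Longrightarrow> 0 < Re (csqrt z)"
  using abs_Re_le_cmod[of z] by simp

text \<open>\<open>1 - (1 - k\<^sup>2) x\<close> is a convex combination of \<open>1\<close> and \<open>k\<^sup>2\<close>, and \<open>k\<^sup>2\<close> avoids the
  closed negative real axis.\<close>

lemma one_minus_one_minus_sq_mult_nonzero:
  fixes k :: complex and x :: real
  assumes "0 < Re k" "0 \<le> x" "x \<le> 1"
  shows "1 - (1 - k\<^sup>2) * of_real x \<noteq> 0"
proof
  assume eq: "1 - (1 - k\<^sup>2) * of_real x = 0"
  then have "x \<noteq> 0" by auto
  have "Im (1 - (1 - k\<^sup>2) * of_real x) = 2 * Re k * Im k * x"
    by (simp add: power2_eq_square)
  then have "Im k = 0" using eq \<open>x \<noteq> 0\<close> assms(1) by simp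
  have "Re (1 - (1 - k\<^sup>2) * of_real x) = (1 - x) + (Re k)\<^sup>2 * x"
    using \<open>Im k = 0\<close> by (simp add: power2_eq_square algebra_simps)
  moreover have "0 < (Re k)\<^sup>2 * x" using assms \<open>x \<noteq> 0\<close> by simp
  ultimately show False using eq assms(3) by simp
qed

definition cos_sin_form :: "'a::real_normed_field \<Rightarrow> real \<Rightarrow> 'a" where
  "cos_sin_form k \<phi> = (of_real (cos \<phi>))\<^sup>2 + k\<^sup>2 * (of_real (sin \<phi>))\<^sup>2"

lemma cos_sin_form_factor:
  fixes k :: complex
  shows "cos_sin_form k \<phi> = (cos \<phi> + \<i> * k * sin \<phi>) * (cos \<phi> - \<i> * k * sin \<phi>)"
  by (simp add: cos_sin_form_def algebra_simps power2_eq_square cos_of_real sin_of_real)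

lemma cos_plus_i_mult_sin_notin_nonpos_Reals:
  fixes k :: complex
  assumes "0 < Re k" "0 \<le> \<phi>" "\<phi> \<le> pi/2"
  shows "cos \<phi> + \<i> * k * sin \<phi> \<notin> \<real>\<^sub>\<le>\<^sub>0" (is "?A \<notin> _")
    and "cos \<phi> - \<i> * k * sin \<phi> \<notin> \<real>\<^sub>\<le>\<^sub>0" (is "?B \<notin> _")
proof -
  have "0 \<le> sin \<phi>" "0 \<le> cos \<phi>" using assms by (simp_all add: sin_ge_zero cos_ge_zero)
  moreover have "cos \<phi> = 1" if "sin \<phi> = 0"
    using that \<open>0 \<le> cos \<phi>\<close> sin_cos_squared_add[of \<phi>] by (simp add: power2_eq_1_iff)
  ultimately show "?A \<notin> \<real>\<^sub>\<le>\<^sub>0" "?B \<notin> \<real>\<^sub>\<le>\<^sub>0"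
    using assms(1) by (auto simp: complex_nonpos_Reals_iff cos_of_real sin_of_real)
qed

lemma cos_sin_form_eq: "cos_sin_form k \<phi> = 1 - (1 - k\<^sup>2) * of_real ((sin \<phi>)\<^sup>2)"
proof -
  have "(of_real (cos \<phi>))\<^sup>2 = 1 - of_real ((sin \<phi>)\<^sup>2)"
    by (metis cos_squared_eq of_real_1 of_real_diff of_real_power)
  then show ?thesis by (simp add: cos_sin_form_def algebra_simps)
qed

lemma cos_sin_form_nonzero:
  fixes k :: complex
  assumes "0 < Re k"
  shows "cos_sin_form k \<phi> \<noteq> 0"
  unfolding cos_sin_form_eq using assms
  by (intro one_minus_one_minus_sq_mult_nonzero) (simp_all add: abs_square_le_1)

lemma cos_sin_form_of_real: "cos_sin_form (of_real a) \<phi> = of_real (cos_sin_form a \<phi>)"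
  by (simp add: cos_sin_form_def)

lemma cos_sin_form_pos:
  fixes a :: real
  assumes "0 < a"
  shows "0 < cos_sin_form a \<phi>"
proof (cases "cos \<phi> = 0")
  case True
  then have "(sin \<phi>)\<^sup>2 = 1" using sin_cos_squared_add[of \<phi>] by simp
  then show ?thesis using True assms by (simp add: cos_sin_form_def)
next
  case False
  then show ?thesis by (simp add: cos_sin_form_def add_pos_nonneg)
qed

lemma has_integral_inverse_cos_sin_form:
  fixes k :: complex
  assumes "0 < Re k"
  shows "((\<lambda>\<phi>. 1 / cos_sin_form k \<phi>) has_integral pi / (2 * k)) {0..pi/2}"
proof -
  have k: "k \<noteq> 0" using assms by auto
  \<comment> \<open>a branch of \<open>arctan (k tan z) / k\<close>\<close>
  define G where "G z = (Ln (cos z + \<i> * k * sin z) - Ln (cos z - \<i> * k * sin z)) / (2 * \<i> * k)" for z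
  have deriv: "(G has_field_derivative 1 / cos_sin_form k x) (at (of_real x))" if "x \<in> {0..pi/2}" for x
  proof -
    define c where "c = cos (complex_of_real x)"
    define s where "s = sin (complex_of_real x)"
    have nonpos: "c + \<i> * k * s \<notin> \<real>\<^sub>\<le>\<^sub>0" "c - \<i> * k * s \<notin> \<real>\<^sub>\<le>\<^sub>0"
      using cos_plus_i_mult_sin_notin_nonpos_Reals[OF assms, of x] that by (auto simp: c_def s_def)
    then have nz: "c + \<i> * k * s \<noteq> 0" "c - \<i> * k * s \<noteq> 0" by auto
    have "((\<lambda>z. cos z + \<i> * k * sin z) has_field_derivative - s + \<i> * k * c) (at (of_real x))"
      "((\<lambda>z. cos z - \<i> * k * sin z) has_field_derivative - s - \<i> * k * c) (at (of_real x))"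
      unfolding c_def s_def by (auto intro!: derivative_eq_intros)
    from this[THEN has_field_derivative_Ln[THEN DERIV_chain2, rotated]]
    have "((\<lambda>z. Ln (cos z + \<i> * k * sin z)) has_field_derivative (- s + \<i> * k * c) / (c + \<i> * k * s)) (at (of_real x))"
      "((\<lambda>z. Ln (cos z - \<i> * k * sin z)) has_field_derivative (- s - \<i> * k * c) / (c - \<i> * k * s)) (at (of_real x))"
      using nonpos by (simp_all add: c_def s_def divide_inverse mult.commute)
    then have "(G has_field_derivative ((- s + \<i> * k * c) / (c + \<i> * k * s) - (- s - \<i> * k * c) / (c - \<i> * k * s)) / (2 * \<i> * k))
          (at (of_real x))"
      unfolding G_def by (intro DERIV_diff DERIV_cdivide)
    moreover have "((- s + \<i> * k * c) / (c + \<i> * k * s) - (- s - \<i> * k * c) / (c - \<i> * k * s)) / (2 * \<i> * k)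
        = 1 / ((c + \<i> * k * s) * (c - \<i> * k * s))"
    proof -
      have "(- s + \<i> * k * c) * (c - \<i> * k * s) - (- s - \<i> * k * c) * (c + \<i> * k * s)
          = 2 * \<i> * k * (s\<^sup>2 + c\<^sup>2)"
        by (simp add: algebra_simps power2_eq_square)
      also have "s\<^sup>2 + c\<^sup>2 = 1" unfolding s_def c_def by (rule sin_cos_squared_add)
      finally have "(- s + \<i> * k * c) * (c - \<i> * k * s) - (- s - \<i> * k * c) * (c + \<i> * k * s) = 2 * \<i> * k"
        by simp
      then show ?thesis using nz k by (simp add: diff_frac_eq)
    qed
    ultimately show ?thesis by (simp add: cos_sin_form_factor c_def s_def cos_of_real sin_of_real)
  qed
  have "((\<lambda>\<phi>. 1 / cos_sin_form k \<phi>) has_integral G (of_real (pi/2)) - G (of_real 0)) {0..pi/2}"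
  proof (rule fundamental_theorem_of_calculus)
    show "((\<lambda>x. G (of_real x)) has_vector_derivative 1 / cos_sin_form k x) (at x within {0..pi/2})"
      if "x \<in> {0..pi/2}" for x
      using has_vector_derivative_real_field[OF deriv[OF that]] by (rule has_vector_derivative_at_within)
  qed simp
  moreover have "G 0 = 0" by (simp add: G_def)
  moreover have "G (pi/2) = pi / (2 * k)"
  proof -
    have "G (pi/2) = (Ln (\<i> * k) - Ln (- (\<i> * k))) / (2 * \<i> * k)" by (simp add: G_def)
    also have "Ln (\<i> * k) - Ln (- (\<i> * k)) = \<i> * pi"
      using Ln_minus[of "\<i> * k"] assms k by simp
    finally show ?thesis using k by simp
  qed
  ultimately show ?thesis by simp
qed

lemma has_integral_cos_sq_div_cos_sin_form:
  fixes k1 k2 :: complex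
  assumes k1: "0 < Re k1" and k2: "0 < Re k2" and "k1 \<noteq> k2"
  shows "((\<lambda>\<phi>. of_real ((cos \<phi>)\<^sup>2) / (cos_sin_form k1 \<phi> * cos_sin_form k2 \<phi>))
           has_integral pi / (2 * (k1 + k2))) {0..pi/2}"
proof -
  have "k1 + k2 \<noteq> 0" using k1 k2 by (metis add_pos_pos plus_complex.sel(1) zero_complex.sel(1) less_irrefl)
  then have sq: "k2\<^sup>2 - k1\<^sup>2 \<noteq> 0" using \<open>k1 \<noteq> k2\<close> by (auto simp: power2_eq_square algebra_simps square_eq_iff)
  have "((\<lambda>\<phi>. (k2\<^sup>2 * (1 / cos_sin_form k2 \<phi>) - k1\<^sup>2 * (1 / cos_sin_form k1 \<phi>)) / (k2\<^sup>2 - k1\<^sup>2))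
         has_integral (k2\<^sup>2 * (pi / (2 * k2)) - k1\<^sup>2 * (pi / (2 * k1))) / (k2\<^sup>2 - k1\<^sup>2)) {0..pi/2}"
    by (intro has_integral_divide has_integral_diff has_integral_mult_right
          has_integral_inverse_cos_sin_form k1 k2)
  moreover have "(k2\<^sup>2 * (pi / (2 * k2)) - k1\<^sup>2 * (pi / (2 * k1))) / (k2\<^sup>2 - k1\<^sup>2) = pi / (2 * (k1 + k2))"
  proof -
    have "k1 \<noteq> 0" "k2 \<noteq> 0" using k1 k2 by auto
    then have num: "k2\<^sup>2 * (pi / (2 * k2)) - k1\<^sup>2 * (pi / (2 * k1)) = (k2 - k1) * (pi / 2)"
      by (simp add: power2_eq_square algebra_simps)
    have den: "k2\<^sup>2 - k1\<^sup>2 = (k2 - k1) * (k1 + k2)" by (simp add: power2_eq_square algebra_simps)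
    show ?thesis unfolding num den using \<open>k1 \<noteq> k2\<close> by simp
  qed
  moreover have "(k2\<^sup>2 * (1 / cos_sin_form k2 \<phi>) - k1\<^sup>2 * (1 / cos_sin_form k1 \<phi>)) / (k2\<^sup>2 - k1\<^sup>2)
      = of_real ((cos \<phi>)\<^sup>2) / (cos_sin_form k1 \<phi> * cos_sin_form k2 \<phi>)" for \<phi>
    using sq cos_sin_form_nonzero[OF k1, of \<phi>] cos_sin_form_nonzero[OF k2, of \<phi>]
    by (simp add: field_simps) (simp add: cos_sin_form_def algebra_simps power2_eq_square)
  ultimately show ?thesis by simp
qed

lemma has_integral_cos_sq_div_cos_sin_form_real:
  fixes a b :: real
  assumes "0 < a" "0 < b" "a \<noteq> b"
  shows "((\<lambda>\<phi>. (cos \<phi>)\<^sup>2 / (cos_sin_form a \<phi> * cos_sin_form b \<phi>)) has_integral pi / (2 * (a + b))) {0..pi/2}"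
proof -
  have "((\<lambda>\<phi>. of_real ((cos \<phi>)\<^sup>2) / (cos_sin_form (complex_of_real a) \<phi> * cos_sin_form (complex_of_real b) \<phi>))
          has_integral pi / (2 * (complex_of_real a + complex_of_real b))) {0..pi/2}"
    by (rule has_integral_cos_sq_div_cos_sin_form) (use assms in auto)
  from has_integral_Re[OF this] show ?thesis
    by (simp add: cos_sin_form_of_real flip: of_real_mult of_real_divide of_real_add)
qed

lemma has_integral_sin_sq_cos_sq_div_cos_sin_form:
  fixes k1 k2 k3 :: complex
  assumes k1: "0 < Re k1" and k2: "0 < Re k2" and k3: "0 < Re k3"
    and "k1 \<noteq> k2" "k1 \<noteq> k3" "k2 \<noteq> k3"
  shows "((\<lambda>\<phi>. of_real ((sin \<phi>)\<^sup>2 * (cos \<phi>)\<^sup>2) / (cos_sin_form k1 \<phi> * cos_sin_form k2 \<phi> * cos_sin_form k3 \<phi>))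
           has_integral pi / (2 * ((k1 + k2) * (k1 + k3) * (k2 + k3)))) {0..pi/2}"
proof -
  have sums: "k1 + k2 \<noteq> 0" "k1 + k3 \<noteq> 0" "k2 + k3 \<noteq> 0"
    using k1 k2 k3 by (auto simp: complex_eq_iff)
  have sq: "k2\<^sup>2 - k1\<^sup>2 = (k2 - k1) * (k1 + k2)" by (simp add: power2_eq_square algebra_simps)
  have "((\<lambda>\<phi>. (of_real ((cos \<phi>)\<^sup>2) / (cos_sin_form k1 \<phi> * cos_sin_form k3 \<phi>)
              - of_real ((cos \<phi>)\<^sup>2) / (cos_sin_form k2 \<phi> * cos_sin_form k3 \<phi>)) / (k2\<^sup>2 - k1\<^sup>2))
         has_integral (pi / (2 * (k1 + k3)) - pi / (2 * (k2 + k3))) / (k2\<^sup>2 - k1\<^sup>2)) {0..pi/2}"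
    by (intro has_integral_divide has_integral_diff has_integral_cos_sq_div_cos_sin_form assms)
  moreover have "(pi / (2 * (k1 + k3)) - pi / (2 * (k2 + k3))) / (k2\<^sup>2 - k1\<^sup>2)
      = pi / (2 * ((k1 + k2) * (k1 + k3) * (k2 + k3)))"
  proof -
    have "pi / (2 * x) - pi / (2 * y) = (y - x) * (pi / (2 * (x * y)))" if "x \<noteq> 0" "y \<noteq> 0" for x y :: complex
      using that by (simp add: field_simps)
    from this[OF sums(2,3)]
    have num: "pi / (2 * (k1 + k3)) - pi / (2 * (k2 + k3)) = (k2 - k1) * (pi / (2 * ((k1 + k3) * (k2 + k3))))"
      by simp
    show ?thesis unfolding num sq using \<open>k1 \<noteq> k2\<close> by (simp add: ac_simps)
  qed
  moreover have "(of_real ((cos \<phi>)\<^sup>2) / (cos_sin_form k1 \<phi> * cos_sin_form k3 \<phi>)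
        - of_real ((cos \<phi>)\<^sup>2) / (cos_sin_form k2 \<phi> * cos_sin_form k3 \<phi>)) / (k2\<^sup>2 - k1\<^sup>2)
      = of_real ((sin \<phi>)\<^sup>2 * (cos \<phi>)\<^sup>2) / (cos_sin_form k1 \<phi> * cos_sin_form k2 \<phi> * cos_sin_form k3 \<phi>)" for \<phi>
  proof -
    have frac: "(c / (d1 * d3) - c / (d2 * d3)) / q = s * c / (d1 * d2 * d3)"
      if "d2 - d1 = q * s" "d1 \<noteq> 0" "d2 \<noteq> 0" "d3 \<noteq> 0" "q \<noteq> 0" for c s d1 d2 d3 q :: complex
    proof -
      have "c / (d1 * d3) - c / (d2 * d3) = c * (d2 - d1) / (d1 * d2 * d3)"
        using that(2-4) by (simp add: field_simps)
      then show ?thesis using that by (simp add: ac_simps)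
    qed
    have "cos_sin_form k2 \<phi> - cos_sin_form k1 \<phi> = (k2\<^sup>2 - k1\<^sup>2) * of_real ((sin \<phi>)\<^sup>2)"
      by (simp add: cos_sin_form_def algebra_simps)
    moreover have "k2\<^sup>2 - k1\<^sup>2 \<noteq> 0" unfolding sq using sums \<open>k1 \<noteq> k2\<close> by simp
    ultimately show ?thesis
      using cos_sin_form_nonzero[OF k1, of \<phi>] cos_sin_form_nonzero[OF k2, of \<phi>] cos_sin_form_nonzero[OF k3, of \<phi>]
      by (simp add: frac)
  qed
  ultimately show ?thesis by simp
qed

lemma scaled_sin_sq_properties:
  fixes c :: real
  assumes "0 \<le> c"
  shows "((\<lambda>\<phi>. c * (sin \<phi>)\<^sup>2) has_real_derivative 2 * c * sin \<phi> * cos \<phi>) (at \<phi>)"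
    and "\<phi> \<in> {0..pi/2} \<Longrightarrow> 0 \<le> 2 * c * sin \<phi> * cos \<phi>"
    and "c * (sin \<phi>)\<^sup>2 \<in> {0..c}"
proof -
  show "((\<lambda>\<phi>. c * (sin \<phi>)\<^sup>2) has_real_derivative 2 * c * sin \<phi> * cos \<phi>) (at \<phi>)"
    by (auto intro!: derivative_eq_intros simp: power2_eq_square)
  show "0 \<le> 2 * c * sin \<phi> * cos \<phi>" if "\<phi> \<in> {0..pi/2}"
    using that assms by (simp add: sin_ge_zero cos_ge_zero)
  have "(sin \<phi>)\<^sup>2 \<le> 1" by (simp add: abs_square_le_1)
  then show "c * (sin \<phi>)\<^sup>2 \<in> {0..c}" using assms by (simp add: mult_left_le)
qed

lemma has_integral_sin_sq_substitution:
  fixes f :: "real \<Rightarrow> 'a::euclidean_space"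
  assumes "0 \<le> c" "continuous_on {0..c} f"
  shows "((\<lambda>\<phi>. (2 * c * sin \<phi> * cos \<phi>) *\<^sub>R f (c * (sin \<phi>)\<^sup>2)) has_integral integral {0..c} f) {0..pi/2}"
proof -
  have "((\<lambda>\<phi>. (2 * c * sin \<phi> * cos \<phi>) *\<^sub>R f (c * (sin \<phi>)\<^sup>2))
         has_integral integral {c * (sin 0)\<^sup>2..c * (sin (pi/2))\<^sup>2} f) {0..pi/2}"
  proof (rule has_integral_substitution[where c = 0 and d = c])
    show "(\<lambda>\<phi>. c * (sin \<phi>)\<^sup>2) ` {0..pi/2} \<subseteq> {0..c}"
      using scaled_sin_sq_properties(3)[OF assms(1)] by blast
    show "((\<lambda>\<phi>. c * (sin \<phi>)\<^sup>2) has_real_derivative 2 * c * sin x * cos x) (at x within {0..pi/2})" for x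
      using scaled_sin_sq_properties(1)[OF assms(1)] by (rule has_field_derivative_at_within)
  qed (use assms in auto)
  then show ?thesis by simp
qed

lemma nn_integral_sin_sq_substitution:
  fixes f :: "real \<Rightarrow> real"
  assumes "0 \<le> c" "set_borel_measurable borel {0..c} f"
  shows "(\<integral>\<^sup>+u. f u * indicator {0..c} u \<partial>lborel)
       = (\<integral>\<^sup>+\<phi>. f (c * (sin \<phi>)\<^sup>2) * (2 * c * sin \<phi> * cos \<phi>) * indicator {0..pi/2} \<phi> \<partial>lborel)"
proof -
  have "(\<integral>\<^sup>+u. f u * indicator {c * (sin 0)\<^sup>2..c * (sin (pi/2))\<^sup>2} u \<partial>lborel)
       = (\<integral>\<^sup>+\<phi>. f (c * (sin \<phi>)\<^sup>2) * (2 * c * sin \<phi> * cos \<phi>) * indicator {0..pi/2} \<phi> \<partial>lborel)"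
  proof (rule nn_integral_substitution)
    show "continuous_on {0..pi/2} (\<lambda>\<phi>. 2 * c * sin \<phi> * cos \<phi>)"
      by (intro continuous_intros)
  qed (use assms scaled_sin_sq_properties[OF assms(1)] in auto)
  then show ?thesis by simp
qed

lemma set_integral_eq_of_nn_integral:
  fixes f :: "'a \<Rightarrow> real"
  assumes "set_borel_measurable M S f" "\<And>x. x \<in> S \<Longrightarrow> 0 \<le> f x" "0 \<le> v"
    and "(\<integral>\<^sup>+x. f x * indicator S x \<partial>M) = ennreal v"
  shows "set_integrable M S f" and "(LINT x:S|M. f x) = v"
proof -
  have "has_bochner_integral M (\<lambda>x. indicator S x *\<^sub>R f x) v"
  proof (rule has_bochner_integral_nn_integral)
    show "(\<integral>\<^sup>+x. ennreal (indicator S x *\<^sub>R f x) \<partial>M) = ennreal v"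
      using assms(4) by (simp add: mult.commute)
  qed (use assms(1-3) in \<open>auto simp: set_borel_measurable_def split: split_indicator\<close>)
  then show "set_integrable M S f" "(LINT x:S|M. f x) = v"
    unfolding set_integrable_def set_lebesgue_integral_def has_bochner_integral_iff by auto
qed

definition jkd_density :: "real \<Rightarrow> real \<Rightarrow> real \<Rightarrow> real" where
  "jkd_density C1 C2 u = C2 * sqrt (u * (C1 - u)) / (pi * (C2\<^sup>2 + u * (C1 - u)))"

lemma jkd_density_sin_sq:
  fixes C1 C2 a b :: real
  assumes "0 < C2" "a \<le> b" "a * b = 1" "C1 = C2 * (b - a)"
  shows "jkd_density C1 C2 (C1 * (sin \<phi>)\<^sup>2)
       = (b - a) * \<bar>sin \<phi> * cos \<phi>\<bar> / (pi * (cos_sin_form a \<phi> * cos_sin_form b \<phi>))"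
proof -
  have cos: "(cos \<phi>)\<^sup>2 = 1 - (sin \<phi>)\<^sup>2" by (rule cos_squared_eq)
  have sq: "C1 * (sin \<phi>)\<^sup>2 * (C1 - C1 * (sin \<phi>)\<^sup>2) = (C2 * (b - a) * (sin \<phi> * cos \<phi>))\<^sup>2"
    unfolding power_mult_distrib cos assms(4) by (simp add: algebra_simps power2_eq_square)
  then have num: "sqrt (C1 * (sin \<phi>)\<^sup>2 * (C1 - C1 * (sin \<phi>)\<^sup>2)) = C2 * (b - a) * \<bar>sin \<phi> * cos \<phi>\<bar>"
    using assms by (simp add: abs_mult)
  have sum_sq: "a\<^sup>2 + b\<^sup>2 = (b - a)\<^sup>2 + 2" using assms(3) by (simp add: power2_eq_square algebra_simps)
  have "cos_sin_form a \<phi> * cos_sin_form b \<phi>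
      = ((cos \<phi>)\<^sup>2)\<^sup>2 + (a\<^sup>2 + b\<^sup>2) * (sin \<phi> * cos \<phi>)\<^sup>2 + (a * b)\<^sup>2 * ((sin \<phi>)\<^sup>2)\<^sup>2"
    by (simp add: cos_sin_form_def algebra_simps power2_eq_square)
  also have "\<dots> = ((cos \<phi>)\<^sup>2)\<^sup>2 + ((b - a)\<^sup>2 + 2) * (sin \<phi> * cos \<phi>)\<^sup>2 + ((sin \<phi>)\<^sup>2)\<^sup>2"
    unfolding sum_sq assms(3) by simp
  also have "\<dots> = ((cos \<phi>)\<^sup>2 + (sin \<phi>)\<^sup>2)\<^sup>2 + (b - a)\<^sup>2 * (sin \<phi> * cos \<phi>)\<^sup>2"
    by (simp only: algebra_simps power2_eq_square)
  finally have prod: "cos_sin_form a \<phi> * cos_sin_form b \<phi> = 1 + (b - a)\<^sup>2 * (sin \<phi> * cos \<phi>)\<^sup>2"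
    by simp
  have den: "C2\<^sup>2 + C1 * (sin \<phi>)\<^sup>2 * (C1 - C1 * (sin \<phi>)\<^sup>2) = C2\<^sup>2 * (cos_sin_form a \<phi> * cos_sin_form b \<phi>)"
    unfolding sq prod by (simp add: power_mult_distrib distrib_left)
  show ?thesis
    unfolding jkd_density_def num den using assms(1) by (simp add: power2_eq_square)
qed

lemma jkd_density_nonneg:
  assumes "0 \<le> C2" "u \<in> {0..C1}"
  shows "0 \<le> jkd_density C1 C2 u"
  using assms unfolding jkd_density_def by (auto intro!: divide_nonneg_nonneg add_nonneg_nonneg)

lemma continuous_on_jkd_density:
  assumes "0 < C2"
  shows "continuous_on {0..C1} (jkd_density C1 C2)"
proof -
  have "0 < C2\<^sup>2 + u * (C1 - u)" if "u \<in> {0..C1}" for u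
    using that assms by (intro add_pos_nonneg) auto
  then show ?thesis unfolding jkd_density_def by (intro continuous_intros) force+
qed

lemma jkd_density_sin_sq_jacobian:
  fixes C1 C2 a b :: real
  assumes "0 < C2" "a \<le> b" "a * b = 1" "C1 = C2 * (b - a)" "\<phi> \<in> {0..pi/2}"
  shows "2 * C1 * sin \<phi> * cos \<phi> * jkd_density C1 C2 (C1 * (sin \<phi>)\<^sup>2)
       = 2 * C1 * (b - a) / pi * ((sin \<phi>)\<^sup>2 * (cos \<phi>)\<^sup>2 / (cos_sin_form a \<phi> * cos_sin_form b \<phi>))"
proof -
  have "0 \<le> sin \<phi>" "0 \<le> cos \<phi>" using assms(5) by (auto intro!: sin_ge_zero cos_ge_zero)
  then show ?thesis
    unfolding jkd_density_sin_sq[OF assms(1-4)] by (simp add: abs_mult power2_eq_square)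
qed

lemma jkd_density_div_integral:
  fixes C1 C2 a b :: real
  assumes C2: "0 < C2" and "0 < a" "a < b" "a * b = 1" and C1: "C1 = C2 * (b - a)"
  shows "set_integrable lborel {0..C1} (\<lambda>u. jkd_density C1 C2 u / u)"
    and "(LINT u:{0..C1}|lborel. jkd_density C1 C2 u / u) = (b - a) / (a + b)"
proof -
  define f where "f u = jkd_density C1 C2 u / u" for u
  define h where "h \<phi> = 2 * (b - a) / pi * ((cos \<phi>)\<^sup>2 / (cos_sin_form a \<phi> * cos_sin_form b \<phi>))" for \<phi>
  have "0 < C1" "0 < b" using assms by simp_all
  have h_nonneg: "0 \<le> h \<phi>" for \<phi>
    using cos_sin_form_pos[OF \<open>0 < a\<close>, of \<phi>] cos_sin_form_pos[OF \<open>0 < b\<close>, of \<phi>] \<open>a < b\<close>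
    by (simp add: h_def)
  have "(h has_integral 2 * (b - a) / pi * (pi / (2 * (a + b)))) {0..pi/2}"
    unfolding h_def using assms
    by (intro has_integral_mult_right has_integral_cos_sq_div_cos_sin_form_real) auto
  moreover have "2 * (b - a) / pi * (pi / (2 * (a + b))) = (b - a) / (a + b)"
    by (simp add: divide_simps) (simp add: algebra_simps)
  ultimately have h_int: "(h has_integral (b - a) / (a + b)) {0..pi/2}" by simp
  have subst_eq: "f (C1 * (sin \<phi>)\<^sup>2) * (2 * C1 * sin \<phi> * cos \<phi>) = h \<phi>" if "\<phi> \<in> {0<..pi/2}" for \<phi>
  proof -
    have "0 < sin \<phi>" "0 \<le> cos \<phi>" using that by (auto intro!: sin_gt_zero cos_ge_zero)
    then show ?thesis
      using \<open>0 < C1\<close> cos_sin_form_pos[OF \<open>0 < a\<close>, of \<phi>] cos_sin_form_pos[OF \<open>0 < b\<close>, of \<phi>]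
      unfolding f_def h_def jkd_density_sin_sq[OF C2 less_imp_le[OF \<open>a < b\<close>] \<open>a * b = 1\<close> C1]
      by (simp add: abs_mult power2_eq_square field_simps)
  qed
  have "(\<integral>\<^sup>+u. f u * indicator {0..C1} u \<partial>lborel)
      = (\<integral>\<^sup>+\<phi>. f (C1 * (sin \<phi>)\<^sup>2) * (2 * C1 * sin \<phi> * cos \<phi>) * indicator {0..pi/2} \<phi> \<partial>lborel)"
    by (rule nn_integral_sin_sq_substitution)
      (use \<open>0 < C1\<close> in \<open>simp_all add: f_def jkd_density_def set_borel_measurable_def\<close>)
  also have "\<dots> = (\<integral>\<^sup>+\<phi>. h \<phi> * indicator {0..pi/2} \<phi> \<partial>lborel)"
    using AE_lborel_singleton[of 0]
    by (intro nn_integral_cong_AE) (auto simp: subst_eq split: split_indicator)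
  also have "\<dots> = ennreal ((b - a) / (a + b))"
    using nn_integral_has_integral_lebesgue'[OF _ h_int] h_nonneg by (simp add: ennreal_mult' ennreal_indicator)
  finally have nn: "(\<integral>\<^sup>+u. f u * indicator {0..C1} u \<partial>lborel) = ennreal ((b - a) / (a + b))" .
  have "set_borel_measurable lborel {0..C1} f"
    unfolding set_borel_measurable_def f_def jkd_density_def by measurable
  moreover have "0 \<le> f u" if "u \<in> {0..C1}" for u
    using jkd_density_nonneg[OF less_imp_le[OF C2] that] that by (simp add: f_def)
  moreover have "0 \<le> (b - a) / (a + b)" using \<open>0 < a\<close> \<open>a < b\<close> by simp
  ultimately show "set_integrable lborel {0..C1} (\<lambda>u. jkd_density C1 C2 u / u)"
    and "(LINT u:{0..C1}|lborel. jkd_density C1 C2 u / u) = (b - a) / (a + b)"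
    using set_integral_eq_of_nn_integral[OF _ _ _ nn] unfolding f_def by auto
qed

lemma jkd_density_stieltjes:
  fixes C1 C2 a b :: real and k :: complex
  assumes C2: "0 < C2" and "0 < a" "a < b" "a * b = 1" and C1: "C1 = C2 * (b - a)"
    and k: "0 < Re k" "k \<noteq> of_real a" "k \<noteq> of_real b"
  shows "(LINT u:{0..C1}|lborel. of_real (jkd_density C1 C2 u) / (1 - (1 - k\<^sup>2) * of_real (u / C1)))
       = of_real (C1 * (b - a)) / ((of_real a + of_real b) * (of_real a + k) * (of_real b + k))"
proof -
  define f where "f u = of_real (jkd_density C1 C2 u) / (1 - (1 - k\<^sup>2) * of_real (u / C1))" for u
  have "0 < C1" "0 < b" using assms by simp_all
  have den: "1 - (1 - k\<^sup>2) * of_real (u / C1) \<noteq> 0" if "u \<in> {0..C1}" for u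
    using that \<open>0 < C1\<close> by (intro one_minus_one_minus_sq_mult_nonzero k) auto
  have cont: "continuous_on {0..C1} f"
    unfolding f_def using den continuous_on_jkd_density[OF C2] \<open>0 < C1\<close>
    by (intro continuous_intros) auto
  have subst: "((\<lambda>\<phi>. (2 * C1 * sin \<phi> * cos \<phi>) *\<^sub>R f (C1 * (sin \<phi>)\<^sup>2)) has_integral integral {0..C1} f) {0..pi/2}"
    using \<open>0 < C1\<close> cont by (intro has_integral_sin_sq_substitution) auto
  have I: "((\<lambda>\<phi>. of_real (2 * C1 * (b - a) / pi) * (of_real ((sin \<phi>)\<^sup>2 * (cos \<phi>)\<^sup>2)
            / (cos_sin_form (of_real a) \<phi> * cos_sin_form (of_real b) \<phi> * cos_sin_form k \<phi>)))
         has_integral of_real (2 * C1 * (b - a) / pi) * (pi / (2 * ((of_real a + of_real b) * (of_real a + k) * (of_real b + k))))) {0..pi/2}"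
    by (intro has_integral_mult_right has_integral_sin_sq_cos_sq_div_cos_sin_form) (use assms in auto)
  have pw: "(2 * C1 * sin \<phi> * cos \<phi>) *\<^sub>R f (C1 * (sin \<phi>)\<^sup>2)
      = of_real (2 * C1 * (b - a) / pi) * (of_real ((sin \<phi>)\<^sup>2 * (cos \<phi>)\<^sup>2)
          / (cos_sin_form (of_real a) \<phi> * cos_sin_form (of_real b) \<phi> * cos_sin_form k \<phi>))"
    if "\<phi> \<in> {0..pi/2}" for \<phi>
  proof -
    note jkd_density_sin_sq_jacobian[OF C2 less_imp_le[OF \<open>a < b\<close>] \<open>a * b = 1\<close> C1 that]
    moreover have "1 - (1 - k\<^sup>2) * of_real (C1 * (sin \<phi>)\<^sup>2 / C1) = cos_sin_form k \<phi>"
      using \<open>0 < C1\<close> by (simp add: cos_sin_form_eq)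
    ultimately show ?thesis
      unfolding f_def scaleR_conv_of_real cos_sin_form_of_real
      by (simp add: mult.assoc flip: of_real_mult)
  qed
  define X where "X = (of_real a + of_real b) * (of_real a + k) * (of_real b + k)"
  have "integral {0..C1} f = of_real (2 * C1 * (b - a) / pi) * (pi / (2 * X))"
    using has_integral_unique[OF subst has_integral_eq[OF pw[symmetric] I]] by (simp add: X_def)
  also have "\<dots> = of_real (C1 * (b - a)) / X" by simp
  finally have "integral {0..C1} f = of_real (C1 * (b - a)) / X" .
  moreover have "set_integrable lborel {0..C1} f"
    unfolding set_integrable_def using cont by (intro borel_integrable_compact) auto
  ultimately have "(LINT u:{0..C1}|lborel. f u) = of_real (C1 * (b - a)) / X"
    by (simp add: set_borel_integral_eq_integral(2))
  then show ?thesis unfolding f_def X_def .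
qed

text \<open>The first summand comes from the branch cut \<open>[0, C1]\<close>, the second from the pole at \<open>\<xi>p\<close>.\<close>

lemma jkd_partial_fractions:
  fixes a b k t :: complex
  assumes ab: "a * b = 1" and t: "t * (b - a) = 1 - k\<^sup>2"
    and "a \<noteq> b" "k \<noteq> a" "k + a \<noteq> 0" "k + b \<noteq> 0" "a + b \<noteq> 0"
  shows "1 / (k - t) = (b - a)\<^sup>2 / ((a + b) * (a + k) * (b + k)) + 2 / ((a + b) * (1 - b * t))"
proof -
  define P where "P = (k + b) * (k - a)"
  define Q where "Q = (a + b) * (b * (k - a) * (k + a))"
  define R where "R = (a + b) * (a + k) * (b + k)"
  have "b \<noteq> 0" using ab by auto
  have nz: "P \<noteq> 0" "Q \<noteq> 0" "R \<noteq> 0" "b - a \<noteq> 0"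
    using assms \<open>b \<noteq> 0\<close> by (auto simp: P_def Q_def R_def add.commute)
  have kt: "(k - t) * (b - a) = P"
    unfolding P_def using t ab by (simp add: algebra_simps power2_eq_square)
  have bt: "(a + b) * (1 - b * t) * (b - a) = Q"
    unfolding Q_def using t ab by algebra
  have inv: "1 / (k - t) = (b - a) / P" "2 / ((a + b) * (1 - b * t)) = 2 * ((b - a) / Q)"
    unfolding kt[symmetric] bt[symmetric] using nz by simp_all
  have key: "(b - a) * (R * Q) = ((b - a)\<^sup>2 * Q + 2 * (b - a) * R) * P"
    unfolding P_def Q_def R_def using ab by algebra
  have "x / P = y / R + 2 * (z / Q)" if "x * (R * Q) = (y * Q + 2 * z * R) * P" for x y z
    using that nz by (simp add: field_simps)
  from this[OF key] show ?thesis unfolding inv R_def .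
qed

lemma jkd_parametrisation:
  fixes C1 C2 :: real
  assumes "0 < C1" "0 < C2"
  defines "\<xi> \<equiv> (C1 + sqrt (C1\<^sup>2 + 4 * C2\<^sup>2)) / 2"
  obtains a b where "0 < a" "a < b" "a * b = 1" "C1 = C2 * (b - a)" "\<xi> = C2 * b"
    "2 * C2 * sqrt (\<xi> * (\<xi> - C1)) / (2 * \<xi> - C1) = 2 * C2 / (a + b)"
proof -
  have "C1 < sqrt (C1\<^sup>2 + 4 * C2\<^sup>2)" using assms(1,2) by (intro real_less_rsqrt) simp
  then have "C1 < \<xi>" by (simp add: \<xi>_def)
  have "\<xi> * (\<xi> - C1) = ((sqrt (C1\<^sup>2 + 4 * C2\<^sup>2))\<^sup>2 - C1\<^sup>2) / 4"
    by (simp add: \<xi>_def field_simps power2_eq_square)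
  then have root: "\<xi> * (\<xi> - C1) = C2\<^sup>2" by simp
  define a b where "a = C2 / \<xi>" and "b = \<xi> / C2"
  have pos: "0 < a" and prod: "a * b = 1" and xi: "\<xi> = C2 * b"
    using assms(1,2) \<open>C1 < \<xi>\<close> by (simp_all add: a_def b_def)
  have C1: "C1 = C2 * (b - a)"
    using assms(1,2) \<open>C1 < \<xi>\<close> root by (simp add: a_def b_def field_simps power2_eq_square)
  have "0 < C1 * \<xi>" using assms(1,2) \<open>C1 < \<xi>\<close> by simp
  then have "C2\<^sup>2 < \<xi>\<^sup>2" using root by (simp add: power2_eq_square algebra_simps)
  then have less: "a < b" using assms(1,2) \<open>C1 < \<xi>\<close> by (simp add: a_def b_def field_simps power2_eq_square)
  have "2 * \<xi> - C1 = C2 * (a + b)" using xi C1 by (simp add: algebra_simps)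
  then have "2 * C2 * sqrt (\<xi> * (\<xi> - C1)) / (2 * \<xi> - C1) = 2 * C2 / (a + b)"
    using root assms(1,2) by (simp add: power2_eq_square)
  from that[OF pos less prod C1 xi this] show ?thesis .
qed

lemma JKD_perm_eq:
  fixes phi ainf K0 eta rhof Lambda \<omega> :: real
  assumes "0 < phi" "0 < eta" "0 < rhof" "0 < Lambda"
  defines "\<nu> \<equiv> eta / rhof" and "F \<equiv> ainf / phi"
  defines "C2 \<equiv> F * K0 / \<nu>"
  defines "C1 \<equiv> 4 * C2 * F * K0 / Lambda\<^sup>2"
  shows "JKD_perm phi ainf K0 eta rhof Lambda \<omega>
       = of_real K0 / (csqrt (1 - \<i> * of_real (C1 * \<omega>)) - \<i> * of_real (C2 * \<omega>))"
proof -
  have "4 * ainf\<^sup>2 * K0\<^sup>2 * rhof * \<omega> / (eta * Lambda\<^sup>2 * phi\<^sup>2) = C1 * \<omega>"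
    "ainf * K0 * rhof * \<omega> / (eta * phi) = C2 * \<omega>"
    unfolding C1_def C2_def F_def \<nu>_def using assms(1-4) by (simp_all add: field_simps power2_eq_square)
  then show ?thesis by (simp add: JKD_perm_def)
qed

lemma jkd_stieltjes_representation:
  fixes C1 C2 a b \<omega> :: real
  assumes C2: "0 < C2" and "0 < a" "a < b" "a * b = 1" and C1: "C1 = C2 * (b - a)"
  shows "1 / (csqrt (1 - \<i> * of_real (C1 * \<omega>)) - \<i> * of_real (C2 * \<omega>))
       = 1 / of_real C2 * ((LINT u:{0..C1}|lborel. of_real (jkd_density C1 C2 u) / (1 - \<i> * of_real (\<omega> * u)))
           + of_real (2 * C2 / (a + b)) / (1 - \<i> * of_real (\<omega> * (C2 * b))))"
proof -
  define k where "k = csqrt (1 - \<i> * of_real (C1 * \<omega>))"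
  have k2: "k\<^sup>2 = 1 - \<i> * of_real (C1 * \<omega>)" by (simp add: k_def)
  have "0 < Re k" unfolding k_def by (intro Re_csqrt_pos) simp
  have ne_one: "a\<^sup>2 \<noteq> 1" "b\<^sup>2 \<noteq> 1"
    using assms by (auto simp: power2_eq_1_iff)
  have "k \<noteq> of_real x" if "x\<^sup>2 \<noteq> 1" for x
  proof
    assume "k = of_real x"
    then have "Re (k\<^sup>2) = x\<^sup>2" by (simp flip: of_real_power)
    with k2 that show False by simp
  qed
  with ne_one have k_ne: "k \<noteq> of_real a" "k \<noteq> of_real b" by blast+
  have "0 < C1" using assms by simp
  have "1 - (1 - k\<^sup>2) * of_real (u / C1) = 1 - \<i> * of_real (\<omega> * u)" for u
    unfolding k2 using \<open>0 < C1\<close> by (simp add: field_simps)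
  then have integral: "(LINT u:{0..C1}|lborel. of_real (jkd_density C1 C2 u) / (1 - \<i> * of_real (\<omega> * u)))
      = of_real (C1 * (b - a)) / ((of_real a + of_real b) * (of_real a + k) * (of_real b + k))"
    using jkd_density_stieltjes[OF assms \<open>0 < Re k\<close> k_ne] by simp
  define X where "X = (of_real a + of_real b) * (of_real a + k) * (of_real b + k)"
  have "1 / (k - \<i> * of_real (C2 * \<omega>))
      = (of_real b - of_real a)\<^sup>2 / X + 2 / ((of_real a + of_real b) * (1 - of_real b * (\<i> * of_real (C2 * \<omega>))))"
    unfolding X_def
  proof (rule jkd_partial_fractions)
    show "\<i> * of_real (C2 * \<omega>) * (of_real b - of_real a) = 1 - k\<^sup>2"
      unfolding k2 C1 by (simp add: algebra_simps)
    show "k + of_real a \<noteq> 0" "k + of_real b \<noteq> 0"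
      using \<open>0 < Re k\<close> assms by (auto simp: complex_eq_iff)
  qed (use assms k_ne in \<open>simp_all flip: of_real_mult of_real_add\<close>)
  also have "\<dots> = 1 / of_real C2 * (of_real (C1 * (b - a)) / X
      + of_real (2 * C2 / (a + b)) / (1 - \<i> * of_real (\<omega> * (C2 * b))))"
    unfolding C1 using C2 by (simp add: field_simps power2_eq_square)
  finally show ?thesis unfolding integral X_def k_def .
qed

theorem mainTheorem1:
  fixes phi ainf K0 eta rhof Lambda :: real
  assumes "0 < phi" "phi < 1" "0 < ainf" "0 < K0" "0 < eta" "0 < rhof" "0 < Lambda"
  defines "\<nu> \<equiv> eta / rhof"
      and "F \<equiv> ainf / phi"
  defines "C2 \<equiv> F * K0 / \<nu>"
  defines "C1 \<equiv> 4 * C2 * F * K0 / Lambda\<^sup>2"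
  defines "\<xi>p \<equiv> (C1 + sqrt (C1\<^sup>2 + 4 * C2\<^sup>2)) / 2"
      and "\<psi> \<equiv> (\<lambda>u::real. C2 * sqrt (u * (C1 - u)) / (pi * (C2\<^sup>2 + u * (C1 - u))))"
  defines "r \<equiv> 2 * C2 * sqrt (\<xi>p * (\<xi>p - C1)) / (2 * \<xi>p - C1)"
  shows "\<xi>p > C1
     \<and> 0 \<le> r
     \<and> (\<forall>u\<in>{0..C1}. 0 \<le> \<psi> u)
     \<and> set_integrable lborel {0..C1} (\<lambda>u. \<psi> u / u)
     \<and> (LINT u:{0..C1}|lborel. \<psi> u / u) + r / \<xi>p = 1
     \<and> (\<forall>\<omega>::real. JKD_perm phi ainf K0 eta rhof Lambda \<omega> =
          complex_of_real (\<nu> / F) *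
            ((LINT u:{0..C1}|lborel.
                complex_of_real (u * (\<psi> u / u)) / (1 - \<i> * complex_of_real (\<omega> * u)))
             + complex_of_real (\<xi>p * (r / \<xi>p)) / (1 - \<i> * complex_of_real (\<omega> * \<xi>p))))"
proof -
  have "0 < \<nu>" "0 < F" using assms by (simp_all add: \<nu>_def F_def)
  then have "0 < C2" using assms by (simp add: C2_def)
  then have "0 < C1" using assms \<open>0 < F\<close> by (simp add: C1_def)
  obtain a b where ab: "0 < a" "a < b" "a * b = 1" "C1 = C2 * (b - a)"
    and \<xi>: "\<xi>p = C2 * b" and r: "r = 2 * C2 / (a + b)"
    using jkd_parametrisation[OF \<open>0 < C1\<close> \<open>0 < C2\<close>, folded \<xi>p_def r_def] .
  have "C1 < \<xi>p" using ab \<xi> mult_pos_pos[OF \<open>0 < C2\<close> ab(1)] by (simp add: algebra_simps)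
  have \<psi>: "\<psi> = jkd_density C1 C2" by (simp add: \<psi>_def jkd_density_def fun_eq_iff)
  note density_div = jkd_density_div_integral[OF \<open>0 < C2\<close> ab]
  have "(b - a) / (a + b) + r / \<xi>p = 1"
    unfolding r \<xi> using ab \<open>0 < C2\<close> by (simp add: divide_simps) (use ab(3) in algebra)
  then have mass: "(LINT u:{0..C1}|lborel. \<psi> u / u) + r / \<xi>p = 1"
    unfolding \<psi> density_div(2) .
  have "JKD_perm phi ainf K0 eta rhof Lambda \<omega> =
          complex_of_real (\<nu> / F) *
            ((LINT u:{0..C1}|lborel.
                complex_of_real (u * (\<psi> u / u)) / (1 - \<i> * complex_of_real (\<omega> * u)))
             + complex_of_real (\<xi>p * (r / \<xi>p)) / (1 - \<i> * complex_of_real (\<omega> * \<xi>p)))" for \<omega>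
  proof -
    have "JKD_perm phi ainf K0 eta rhof Lambda \<omega>
        = of_real K0 * (1 / (csqrt (1 - \<i> * of_real (C1 * \<omega>)) - \<i> * of_real (C2 * \<omega>)))"
      unfolding C1_def C2_def F_def \<nu>_def JKD_perm_eq[OF assms(1,5,6,7)] by simp
    also have "\<dots> = of_real (K0 / C2) * ((LINT u:{0..C1}|lborel. of_real (\<psi> u) / (1 - \<i> * of_real (\<omega> * u)))
        + of_real r / (1 - \<i> * of_real (\<omega> * \<xi>p)))"
      unfolding jkd_stieltjes_representation[OF \<open>0 < C2\<close> ab] \<psi> r \<xi> by simp
    also have "K0 / C2 = \<nu> / F" unfolding C2_def using \<open>0 < \<nu>\<close> \<open>0 < F\<close> \<open>0 < K0\<close> by simp
    also have "(\<lambda>u. of_real (\<psi> u) / (1 - \<i> * of_real (\<omega> * u)))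
        = (\<lambda>u. of_real (u * (\<psi> u / u)) / (1 - \<i> * of_real (\<omega> * u)))"
      by (simp add: \<psi>_def fun_eq_iff)
    also have "r = \<xi>p * (r / \<xi>p)" using \<open>C1 < \<xi>p\<close> \<open>0 < C1\<close> by simp
    finally show ?thesis .
  qed
  then show ?thesis
    using \<open>C1 < \<xi>p\<close> r ab \<open>0 < C2\<close> jkd_density_nonneg density_div mass unfolding \<psi> by auto
qed

end
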